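(* Let $n\ge2$. Let $Y$ have a continuous distribution function $G$ on $[l_G,r_G]$, and let $g$ be positive, continuous and strictly decreasing on $(l_G,r_G)$ with $\lim_{y\to r_G^-}g(y)=0$; put $\tau=\lim_{y\to l_G^+}[g(y)]^{-2}$. Then \[ E[g(Y(n))\mid Y(n-1)=s,\ Y(n+1)=t]=\frac{2g(s)g(t)}{g(s)+g(t)}\qquad (l_G<s<t<r_G) \] holds if and only if $G(y)=1-\exp\{-c([g(y)]^{-2}-\tau)\}$ for $l_G<y<r_G$, for some constant $c>0$.
   Context: $Y_1,Y_2,\dots$ are i.i.d. copies of $Y$ with distribution function $G$; $l_G=\inf\{y:G(y)>0\}$, $r_G=\sup\{y:G(y)<1\}$. Upper record times $L(1)=1$, $L(m)=\min\{j>L(m-1):Y_j>Y_{L(m-1)}\}$, record values $Y(m)=Y_{L(m)}$. With $R(y)=-\ln(1-G(y))$, conditional expectations given $Y(n-1)=s$, $Y(n+1)=t$ use the conditional density of $Y(n)$: $\frac{R'(x)}{R(t)-R(s)}$, $s<x<t$. *)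

theory Defs
  imports "HOL-Analysis.Analysis"
begin

definition lG :: "(real \<Rightarrow> real) \<Rightarrow> ereal" where
  "lG G = Inf (ereal ` {y. G y > 0})"

definition rG :: "(real \<Rightarrow> real) \<Rightarrow> ereal" where
  "rG G = Sup (ereal ` {y. G y < 1})"

definition at_left_e :: "ereal \<Rightarrow> real filter" where
  "at_left_e r = (if r = \<infinity> then at_top else at_left (real_of_ereal r))"

definition at_right_e :: "ereal \<Rightarrow> real filter" where
  "at_right_e l = (if l = -\<infinity> then at_bot else at_right (real_of_ereal l))"

definition is_distr_fun :: "(real \<Rightarrow> real) \<Rightarrow> bool" where
  "is_distr_fun G \<longleftrightarrow> mono G \<and> (\<forall>x. continuous (at_right x) G)
     \<and> (G \<longlongrightarrow> 0) at_bot \<and> (G \<longlongrightarrow> 1) at_top"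

definition hazR :: "(real \<Rightarrow> real) \<Rightarrow> real \<Rightarrow> real" where
  "hazR G y = - ln (1 - G y)"

text \<open>Lebesgue--Stieltjes measure dR restricted to [s,t] (R frozen outside [s,t]).\<close>
definition hazR_measure :: "(real \<Rightarrow> real) \<Rightarrow> real \<Rightarrow> real \<Rightarrow> real measure" where
  "hazR_measure G s t = interval_measure (\<lambda>x. hazR G (max s (min t x)))"

text \<open>E[h(Y(n)) | Y(n-1)=s, Y(n+1)=t]: integral of h against the conditional law
  dR(x)/(R(t)-R(s)) on (s,t) (density R'(x)/(R(t)-R(s)) when R is differentiable).\<close>
definition rec_cond_exp :: "(real \<Rightarrow> real) \<Rightarrow> (real \<Rightarrow> real) \<Rightarrow> real \<Rightarrow> real \<Rightarrow> real" where
  "rec_cond_exp G h s t =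
     (LINT x:{s<..<t}|hazR_measure G s t. h x) / (hazR G t - hazR G s)"

end

theory Submission
  imports Defs "HOL-Probability.Probability"
begin

text \<open>
  Write \<open>R = -ln(1 - G)\<close> for the cumulative hazard and \<open>u = 1/g\<^sup>2\<close>.  The conditional
  expectation is the integral of \<open>g\<close> against \<open>dR\<close> on \<open>(s,t)\<close>, divided by \<open>R t - R s\<close>.

  \<^item> If \<open>R = c (u - \<tau>)\<close>, the substitution \<open>v = R x - R s\<close> (under \<open>dR\<close> the variable
    \<open>R\<close> is uniformly distributed) turns the integral into \<open>\<integral> 1/sqrt(v/c + u s) dv\<close>,
    which evaluates to the harmonic mean.
  \<^item> Conversely, splitting \<open>(a,c)\<close> at \<open>b\<close> and using additivity of the integrals, the
    harmonic-mean identity for the three pairs forces the slopes of \<open>R\<close> against \<open>u\<close> on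
    \<open>[a,b]\<close> and \<open>[b,c]\<close> to agree; hence \<open>R\<close> is affine in \<open>u\<close>, and since \<open>R \<to> 0\<close> and
    \<open>u \<to> \<tau>\<close> at the left end of the support, \<open>R = c (u - \<tau>)\<close> with \<open>c > 0\<close>.
\<close>

text \<open>The key algebraic fact: if the hazard increments \<open>X\<close> over
  \<open>[a,b]\<close> and \<open>Y\<close> over \<open>[b,c]\<close> reproduce the harmonic mean over \<open>[a,c]\<close> additively, then
  \<open>X\<close> and \<open>Y\<close> are proportional to the increments of \<open>1/g\<^sup>2\<close> (here \<open>a, b, c\<close> are the values
  of the decreasing function \<open>g\<close> at three increasing points).\<close>

definition harmonic_mean :: "real \<Rightarrow> real \<Rightarrow> real" where
  "harmonic_mean a b = 2 * a * b / (a + b)"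

lemma harmonic_mean_balance:
  fixes a b c X Y :: real
  assumes order: "a > b" "b > c" "c > 0"
    and balance: "X * harmonic_mean a b + Y * harmonic_mean b c = (X + Y) * harmonic_mean a c"
  shows "X / (1/b^2 - 1/a^2) = Y / (1/c^2 - 1/b^2)"
proof -
  have "2*a*b/(a+b) * (a+b) = 2*a*b" "2*b*c/(b+c) * (b+c) = 2*b*c" "2*a*c/(a+c) * (a+c) = 2*a*c"
    using order by auto
  then have cross: "X * a^2 * (b^2 - c^2) = Y * c^2 * (a^2 - b^2)"
    using balance unfolding harmonic_mean_def by algebra
  have "b^2 < a^2" "c^2 < b^2"
    using order by (simp_all add: power_strict_mono)
  then show ?thesis
    using order cross by (simp add: field_simps) algebra
qed

definition slope :: "(real \<Rightarrow> real) \<Rightarrow> (real \<Rightarrow> real) \<Rightarrow> real \<Rightarrow> real \<Rightarrow> real" where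
  "slope R u a b = (R b - R a) / (u b - u a)"

lemma slope_sym: "slope R u a b = slope R u b a"
  unfolding slope_def by (simp add: divide_simps algebra_simps)

lemma slope_affine: "u a \<noteq> u b \<Longrightarrow> R b = R a + slope R u a b * (u b - u a)"
  unfolding slope_def by simp

lemma slope_chord:
  assumes "u a < u b" "u b < u c" and "slope R u a b = slope R u b c"
  shows "slope R u a c = slope R u a b"
proof -
  have "R c - R a = slope R u a b * (u c - u a)"
    using slope_affine[of u a b R] slope_affine[of u b c R] assms by (simp add: algebra_simps)
  then show ?thesis using assms by (simp add: slope_def)
qed

lemma equal_slopes_affine:
  fixes R u :: "real \<Rightarrow> real"
  assumes u: "strict_mono_on S u"
    and slopes: "\<And>a b c. a \<in> S \<Longrightarrow> b \<in> S \<Longrightarrow> c \<in> S \<Longrightarrow> a < b \<Longrightarrow> b < c \<Longrightarrow>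
                   slope R u a b = slope R u b c"
    and y0: "y0 \<in> S" and y1: "y1 \<in> S" "y0 < y1" and y: "y \<in> S"
  shows "R y = R y0 + slope R u y0 y1 * (u y - u y0)"
proof -
  have u_less: "u a < u b" if "a \<in> S" "b \<in> S" "a < b" for a b
    using u that by (simp add: strict_mono_on_def)
  consider "y < y0" | "y = y0" | "y0 < y" "y < y1" | "y = y1" | "y1 < y" by linarith
  then have "slope R u y0 y = slope R u y0 y1 \<or> y = y0"
  proof cases
    case 1
    then show ?thesis using slopes[OF y y0 y1(1) 1 y1(2)] slope_sym by metis
  next
    case 3
    then show ?thesis
      using slope_chord[OF u_less[OF y0 y 3(1)] u_less[OF y y1(1) 3(2)] slopes[OF y0 y y1(1) 3]]
      by simp
  next
    case 5
    then show ?thesis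
      using slope_chord[OF u_less[OF y0 y1] u_less[OF y1(1) y 5] slopes[OF y0 y1(1) y y1(2) 5]]
      by simp
  qed simp_all
  then show ?thesis
    using slope_affine[of u y0 y R] u_less[OF y0 y] u_less[OF y y0]
    by (cases y y0 rule: linorder_cases) auto
qed

lemma integral_inv_sqrt:
  fixes c p D :: real
  assumes c: "c > 0" and p: "p > 0" and D: "D \<ge> 0"
  shows "(LBINT v:{0..D}. 1 / sqrt (v / c + p)) = 2 * c * (sqrt (D / c + p) - sqrt p)"
proof -
  have pos: "v / c + p > 0" if "v \<in> {0..D}" for v
    using that c p by (auto intro!: add_nonneg_pos divide_nonneg_pos)
  have "(LBINT v:{0..D}. 1 / sqrt (v / c + p)) = (LBINT v=ereal 0..ereal D. 1 / sqrt (v / c + p))"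
    by (rule interval_integral_Icc[OF D, symmetric])
  also have "\<dots> = 2 * c * sqrt (D / c + p) - 2 * c * sqrt (0 / c + p)"
  proof (rule interval_integral_FTC_finite)
    show "continuous_on {min 0 D..max 0 D} (\<lambda>v. 1 / sqrt (v / c + p))"
      using pos c D by (intro continuous_intros) force+
    fix v assume "min 0 D \<le> v" "v \<le> max 0 D"
    then have "v / c + p > 0" using pos D by auto
    then have "((\<lambda>v. 2 * c * sqrt (v / c + p)) has_real_derivative 1 / sqrt (v / c + p))
        (at v within {min 0 D..max 0 D})"
      using c by (auto intro!: derivative_eq_intros simp: field_simps)
    then show "((\<lambda>v. 2 * c * sqrt (v / c + p)) has_vector_derivative 1 / sqrt (v / c + p))
        (at v within {min 0 D..max 0 D})"
      by (simp add: has_real_derivative_iff_has_vector_derivative)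
  qed
  finally show ?thesis by (simp add: algebra_simps)
qed

definition frozen_measure :: "(real \<Rightarrow> real) \<Rightarrow> real \<Rightarrow> real \<Rightarrow> real measure" where
  "frozen_measure R s t = interval_measure (\<lambda>x. R (max s (min t x)))"

locale frozen =
  fixes R :: "real \<Rightarrow> real" and s t :: real
  assumes le: "s \<le> t" and cont: "continuous_on {s..t} R" and mono: "mono_on {s..t} R"
begin

definition F :: "real \<Rightarrow> real" where
  "F x = R (max s (min t x)) - R s"

abbreviation D :: real where
  "D \<equiv> R t - R s"

abbreviation \<mu> :: "real measure" where
  "\<mu> \<equiv> frozen_measure R s t"

lemma F_mono: "x \<le> y \<Longrightarrow> F x \<le> F y"
  unfolding F_def using le by (auto intro!: mono_onD[OF mono])

lemma F_cont: "continuous_on UNIV F"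
proof -
  have "continuous_on UNIV (\<lambda>x. R (max s (min t x)))"
    by (rule continuous_on_compose2[OF cont]) (use le in \<open>auto intro!: continuous_intros\<close>)
  then show ?thesis unfolding F_def by (intro continuous_intros)
qed

lemma F_right_cont: "continuous (at_right x) F"
  using F_cont by (simp add: continuous_on_eq_continuous_within continuous_at_imp_continuous_at_within)

lemma F_low: "x \<le> s \<Longrightarrow> F x = 0"
  unfolding F_def by (smt (verit) le)

lemma F_high: "t \<le> x \<Longrightarrow> F x = D"
  unfolding F_def by (smt (verit) le)

lemma F_borel[measurable]: "F \<in> borel_measurable borel"
  using F_cont by (rule borel_measurable_continuous_onI)

lemma F_range: "0 \<le> F x" "F x \<le> D"
  using F_mono[of "min x s" x] F_low[of "min x s"] F_mono[of x "max x t"] F_high[of "max x t"]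
  by auto

lemma F_at_bot: "(F \<longlongrightarrow> 0) at_bot"
  by (rule tendsto_eventually) (auto simp: eventually_at_bot_linorder intro!: exI[of _ s] F_low)

lemma F_at_top: "(F \<longlongrightarrow> D) at_top"
  by (rule tendsto_eventually) (auto simp: eventually_at_top_linorder intro!: exI[of _ t] F_high)

text \<open>Shifting by the constant \<open>R s\<close> does not change the Stieltjes measure.\<close>
lemma measure_eq: "\<mu> = interval_measure F"
  unfolding frozen_measure_def interval_measure_def F_def by simp

lemma finite_borel: "finite_borel_measure \<mu>"
  unfolding measure_eq
  using finite_borel_measure_interval_measure[OF F_mono F_right_cont F_at_bot F_at_top]
    F_range[of t] by simp

lemma measure_atMost: "measure \<mu> {..x} = F x"
  unfolding measure_eq by (rule measure_interval_measure_Iic[OF F_mono F_right_cont F_at_bot])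

lemma measure_Ioc: "x \<le> y \<Longrightarrow> measure \<mu> {x<..y} = F y - F x"
  unfolding measure_eq by (rule measure_interval_measure_Ioc[OF _ F_mono F_right_cont])

lemma emeasure_UNIV: "emeasure \<mu> UNIV = D"
  unfolding measure_eq
  using interval_measure_UNIV[OF F_mono F_right_cont F_at_bot F_at_top] F_range[of t] by simp

lemma null_singleton: "{x} \<in> null_sets \<mu>"
  using emeasure_interval_measure_Icc[OF _ F_mono F_cont, of x x]
  by (simp add: measure_eq null_sets_def)

lemma AE_inside: "AE x in \<mu>. s < x \<and> x < t"
proof -
  have "emeasure \<mu> {s<..t} = D"
    using emeasure_interval_measure_Ioc[OF le F_mono F_right_cont] F_low[of s] F_high[of t]
    by (simp add: measure_eq)
  then have "emeasure \<mu> (UNIV - {s<..t}) = 0"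
    using emeasure_compl[of "{s<..t}" \<mu>] emeasure_UNIV by (simp add: measure_eq)
  then have "UNIV - {s<..t} \<in> null_sets \<mu>"
    by (simp add: null_sets_def measure_eq)
  then have "AE x in \<mu>. x \<in> {s<..t}"
    by (rule AE_I') auto
  moreover have "AE x in \<mu>. x \<noteq> t"
    by (rule AE_I'[OF null_singleton]) auto
  ultimately show ?thesis by eventually_elim auto
qed

lemma sublevel_ray:
  assumes "0 \<le> v" "v < D"
  obtains m where "{x. F x \<le> v} = {..m}" "F m = v"
proof -
  define A where "A = {x. F x \<le> v}"
  have closed: "closed A"
    unfolding A_def by (rule closed_Collect_le[OF F_cont continuous_on_const])
  have "s \<in> A" using assms F_low[of s] by (simp add: A_def)
  moreover have "x \<le> t" if "x \<in> A" for x
    using that assms F_high[of x] by (cases "t \<le> x") (auto simp: A_def)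
  then have bdd: "bdd_above A" by (rule bdd_aboveI)
  ultimately have "Sup A \<in> A"
    using closed_contains_Sup[OF _ bdd closed] by blast
  then have ray: "A = {..Sup A}"
    using cSup_upper[OF _ bdd] F_mono by (auto simp: A_def intro: order.trans)
  obtain x0 where "x0 \<in> {s..t}" "F x0 = v"
    using IVT'[of F s v t] assms F_low[of s] F_high[of t] le continuous_on_subset[OF F_cont]
    by auto
  then have "v \<le> F (Sup A)"
    using ray F_mono[of x0 "Sup A"] by (auto simp: A_def)
  with \<open>Sup A \<in> A\<close> have "F (Sup A) = v" by (simp add: A_def)
  with ray show thesis by (intro that[of "Sup A"]) (simp_all add: A_def)
qed

lemma measure_sublevel: "measure \<mu> {x. F x \<le> v} = max 0 (min D v)"
proof -
  consider "v < 0" | "0 \<le> v" "v < D" | "D \<le> v" by linarith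
  then show ?thesis
  proof cases
    case 1
    then have "{x. F x \<le> v} = {}" using F_range by (auto simp: not_le intro: less_le_trans)
    then show ?thesis using 1 by simp
  next
    case 2
    then obtain m where "{x. F x \<le> v} = {..m}" "F m = v" by (rule sublevel_ray)
    then show ?thesis using 2 measure_atMost[of m] by simp
  next
    case 3
    then have "{x. F x \<le> v} = UNIV" using F_range order.trans by blast
    then show ?thesis using 3 emeasure_UNIV F_range[of t] by (simp add: measure_def)
  qed
qed

lemma distr_uniform: "distr \<mu> lborel F = density lborel (\<lambda>v. ennreal (indicator {0..D} v))"
proof (rule cdf_unique')
  show "finite_borel_measure (distr \<mu> lborel F)"
    using emeasure_UNIV by (auto intro!: finite_measureI simp: finite_borel_measure_def
       finite_borel_measure_axioms_def emeasure_distr measure_eq)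
  show "finite_borel_measure (density lborel (\<lambda>v. ennreal (indicator {0..D} v)))"
    using F_range[of t] by (auto intro!: finite_measureI simp: finite_borel_measure_def
       finite_borel_measure_axioms_def ennreal_indicator emeasure_restricted)
  have "cdf (density lborel (\<lambda>v. ennreal (indicator {0..D} v))) v = measure lborel {0..min D v}" for v
  proof -
    have "{0..D} \<inter> {..v} = {0..min D v}" by auto
    then show ?thesis unfolding cdf_def measure_def by (simp add: ennreal_indicator emeasure_restricted)
  qed
  moreover have "cdf (distr \<mu> lborel F) v = measure \<mu> {x. F x \<le> v}" for v
    by (simp add: cdf_def measure_distr vimage_def measure_eq)
  ultimately show "cdf (distr \<mu> lborel F) = cdf (density lborel (\<lambda>v. ennreal (indicator {0..D} v)))"
    using measure_sublevel F_range[of t] by (auto simp: fun_eq_iff)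
qed

lemma integral_change_var:
  fixes f :: "real \<Rightarrow> real"
  assumes [measurable]: "f \<in> borel_measurable borel"
  shows "(LINT x:{s<..<t}|\<mu>. f (F x)) = (LBINT v:{0..D}. f v)"
proof -
  have "(LINT x:{s<..<t}|\<mu>. f (F x)) = (LINT x|\<mu>. f (F x))"
    unfolding set_lebesgue_integral_def
    by (rule integral_cong_AE) (use AE_inside in \<open>auto simp: measure_eq elim: eventually_mono\<close>)
  also have "\<dots> = (LINT v|distr \<mu> lborel F. f v)"
    by (rule integral_distr[symmetric]) (simp_all add: measure_eq)
  also have "\<dots> = (LBINT v:{0..D}. f v)"
    unfolding distr_uniform set_lebesgue_integral_def
    by (subst integral_density) (auto simp: indicator_def)
  finally show ?thesis .
qed

lemma sets_eq[simp]: "sets \<mu> = sets borel"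
  and space_eq[simp]: "space \<mu> = UNIV"
  by (simp_all add: measure_eq)

lemma borel_measurable_iff: "h \<in> borel_measurable \<mu> \<longleftrightarrow> h \<in> borel_measurable borel"
  by (simp add: measurable_def)

lemma frozen_measure_restrict:
  assumes "s \<le> a" "a \<le> b" "b \<le> t"
  shows "frozen_measure R a b = density \<mu> (\<lambda>x. ennreal (indicator {a<..b} x))"
proof -
  interpret sub: frozen R a b
    using assms le by unfold_locales (auto intro: continuous_on_subset[OF cont] mono_on_subset[OF mono])
  have "cdf (density \<mu> (\<lambda>x. ennreal (indicator {a<..b} x))) x = measure \<mu> ({a<..b} \<inter> {..x})" for x
    unfolding cdf_def measure_def by (simp add: ennreal_indicator emeasure_restricted measure_eq)
  also have "\<dots> x = sub.F x" for x
  proof (cases "x \<le> a")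
    case True
    then have "{a<..b} \<inter> {..x} = {}" by auto
    then show ?thesis using True sub.F_low[of x] by simp
  next
    case False
    then have "{a<..b} \<inter> {..x} = {a<..min b x}" by auto
    then show ?thesis using False assms measure_Ioc[of a "min b x"]
      by (simp add: F_def sub.F_def max_def min_def)
  qed
  moreover have "finite_borel_measure (density \<mu> (\<lambda>x. ennreal (indicator {a<..b} x)))"
  proof -
    interpret finite_borel_measure \<mu> by (rule finite_borel)
    have "emeasure (density \<mu> (\<lambda>x. ennreal (indicator {a<..b} x))) UNIV = emeasure \<mu> {a<..b}"
      using emeasure_restricted[of "{a<..b}" \<mu> UNIV] by (simp add: ennreal_indicator)
    then show ?thesis
      by (auto intro!: finite_measureI simp: finite_borel_measure_def
          finite_borel_measure_axioms_def emeasure_finite)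
  qed
  ultimately show ?thesis
    by (intro cdf_unique' sub.finite_borel) (auto simp: fun_eq_iff cdf_def sub.measure_atMost)
qed

lemma set_integral_restrict:
  fixes f :: "real \<Rightarrow> real"
  assumes "s \<le> a" "a \<le> b" "b \<le> t" and "set_borel_measurable borel {a<..<b} f"
  shows "(LINT x:{a<..<b}|frozen_measure R a b. f x) = (LINT x:{a<..<b}|\<mu>. f x)"
  using assms(4) unfolding frozen_measure_restrict[OF assms(1-3)] set_lebesgue_integral_def
    set_borel_measurable_def
  by (subst integral_density) (auto simp: borel_measurable_iff indicator_def
      intro!: Bochner_Integration.integral_cong)

text \<open>The conditional integrals over adjacent intervals \<open>(s,b)\<close> and \<open>(b,t)\<close> add up to the one
  over \<open>(s,t)\<close>; the point \<open>b\<close> carries no mass since \<open>R\<close> is continuous.\<close>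
lemma set_integral_split:
  fixes f :: "real \<Rightarrow> real"
  assumes b: "s \<le> b" "b \<le> t" and f: "continuous_on {s..t} f"
  shows "(LINT x:{s<..<t}|\<mu>. f x)
       = (LINT x:{s<..<b}|frozen_measure R s b. f x) + (LINT x:{b<..<t}|frozen_measure R b t. f x)"
proof -
  interpret finite_borel_measure \<mu> by (rule finite_borel)
  have meas: "set_borel_measurable borel A f" if "A \<subseteq> {s..t}" "A \<in> sets borel" for A
    using borel_measurable_continuous_on_indicator[OF that(2) continuous_on_subset[OF f that(1)]]
    by (simp add: set_borel_measurable_def)
  obtain B where B: "\<And>x. x \<in> {s..t} \<Longrightarrow> norm (f x) \<le> B"
    using compact_imp_bounded[OF compact_continuous_image[OF f compact_Icc]]
    unfolding bounded_iff by force
  have integrable: "set_integrable \<mu> A f" if "A \<subseteq> {s..t}" "A \<in> sets borel" for A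
    unfolding set_integrable_def
  proof (rule integrable_const_bound[where B = "max 0 B"])
    show "AE x in \<mu>. norm (indicator A x *\<^sub>R f x) \<le> max 0 B"
      using B that(1) by (intro AE_I2) (force simp: indicator_def)
    show "(\<lambda>x. indicator A x *\<^sub>R f x) \<in> borel_measurable \<mu>"
      using meas[OF that] by (simp add: borel_measurable_iff set_borel_measurable_def)
  qed
  have pieces: "{s<..<t} \<subseteq> {s..t}" "{s<..<b} \<union> {b<..<t} \<subseteq> {s..t}"
    "{s<..<b} \<subseteq> {s..t}" "{b<..<t} \<subseteq> {s..t}"
    using b by auto
  have "(LINT x:{s<..<t}|\<mu>. f x) = (LINT x:{s<..<b} \<union> {b<..<t}|\<mu>. f x)"
  proof (rule set_integral_cong_set)
    show "AE x in \<mu>. (x \<in> {s<..<b} \<union> {b<..<t}) = (x \<in> {s<..<t})"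
      by (rule AE_I'[OF null_singleton[of b]]) (use b in auto)
  qed (use meas[OF pieces(1)] meas[OF pieces(2)]
      in \<open>auto simp: borel_measurable_iff set_borel_measurable_def\<close>)
  also have "\<dots> = (LINT x:{s<..<b}|\<mu>. f x) + (LINT x:{b<..<t}|\<mu>. f x)"
    by (rule set_integral_Un) (use integrable[OF pieces(3)] integrable[OF pieces(4)] in auto)
  finally show ?thesis
    using set_integral_restrict[of s b f] set_integral_restrict[of b t f]
      meas[OF pieces(3)] meas[OF pieces(4)] b le by simp
qed



text \<open>Forward computation: if \<open>R = c (1/g\<^sup>2 - \<tau>)\<close> on \<open>[s,t]\<close>, then \<open>g x = f (F x)\<close> with
  \<open>f v = 1/sqrt(v/c + 1/g(s)\<^sup>2)\<close>, and the mean of \<open>g\<close> under \<open>dR/D\<close> is the harmonic mean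
  of \<open>g s\<close> and \<open>g t\<close>.\<close>
lemma harmonic_conditional_mean:
  fixes g :: "real \<Rightarrow> real" and c \<tau> :: real
  assumes c: "c > 0" and g_pos: "\<And>y. y \<in> {s..t} \<Longrightarrow> g y > 0" and g_less: "g t < g s"
    and R_g: "\<And>y. y \<in> {s..t} \<Longrightarrow> R y = c * (1 / (g y)\<^sup>2 - \<tau>)"
  shows "(LINT x:{s<..<t}|\<mu>. g x) / D = harmonic_mean (g s) (g t)"
proof -
  have gs: "g s > 0" and gt: "g t > 0" using g_pos le by auto
  define p where "p = 1 / (g s)\<^sup>2"
  define f where "f v = 1 / sqrt (v / c + p)" for v
  have D_eq: "D = c * (1 / (g t)\<^sup>2 - 1 / (g s)\<^sup>2)"
    using R_g[of s] R_g[of t] le by (simp add: algebra_simps)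
  have "g x = f (F x)" if "x \<in> {s<..<t}" for x
  proof -
    have "F x / c + p = 1 / (g x)\<^sup>2"
      using that R_g[of x] R_g[of s] c by (simp add: F_def p_def field_simps)
    then show ?thesis
      using g_pos[of x] that by (simp add: f_def real_sqrt_divide)
  qed
  then have "(LINT x:{s<..<t}|\<mu>. g x) = (LINT x:{s<..<t}|\<mu>. f (F x))"
    by (intro set_lebesgue_integral_cong) auto
  also have "\<dots> = (LBINT v:{0..D}. f v)"
    by (rule integral_change_var) (simp add: f_def)
  also have "\<dots> = 2 * c * (sqrt (D / c + p) - sqrt p)"
    unfolding f_def using F_range[of t] c gs by (intro integral_inv_sqrt) (auto simp: p_def)
  also have "\<dots> = 2 * c * (1 / g t - 1 / g s)"
    using c gs gt by (simp add: D_eq p_def real_sqrt_divide)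
  finally have num: "(LINT x:{s<..<t}|\<mu>. g x) = 2 * c * (1 / g t - 1 / g s)" .
  have den: "D = c * (1 / g t - 1 / g s) * (1 / g t + 1 / g s)"
    using D_eq by (simp add: power2_eq_square algebra_simps)
  have cancel: "2 * c * (x - y) / (c * (x - y) * (x + y)) = 2 / (x + y)" if "x - y \<noteq> 0" for x y
    using that c by (simp add: divide_simps)
  have "1 / g t - 1 / g s \<noteq> 0" using g_less gs gt by (simp add: field_simps)
  then have "(LINT x:{s<..<t}|\<mu>. g x) / D = 2 / (1 / g t + 1 / g s)"
    unfolding num den by (rule cancel)
  then show ?thesis
    unfolding harmonic_mean_def using gs gt by (simp add: field_simps)
qed

end

definition open_support :: "(real \<Rightarrow> real) \<Rightarrow> real set" where
  "open_support G = {y. lG G < ereal y \<and> ereal y < rG G}"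

locale cont_distr_fun =
  fixes G :: "real \<Rightarrow> real"
  assumes distr: "is_distr_fun G" and cont: "continuous_on UNIV G"
begin

abbreviation S :: "real set" where
  "S \<equiv> open_support G"

lemma G_mono: "x \<le> y \<Longrightarrow> G x \<le> G y"
  using distr by (auto simp: is_distr_fun_def mono_def)

lemma G_at_bot: "(G \<longlongrightarrow> 0) at_bot" and G_at_top: "(G \<longlongrightarrow> 1) at_top"
  using distr by (simp_all add: is_distr_fun_def)

lemma G_nonneg: "0 \<le> G x"
  using G_at_bot
  by (rule tendsto_upperbound) (auto simp: eventually_at_bot_linorder G_mono intro!: exI[of _ x])

lemma open_support_Icc: "a \<in> S \<Longrightarrow> b \<in> S \<Longrightarrow> {a..b} \<subseteq> S"
  unfolding open_support_def
  by (auto intro: order.strict_trans2[of "lG G" "ereal a"] order.strict_trans1[of _ "ereal b" "rG G"])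

lemma G_open_support: "y \<in> S \<Longrightarrow> 0 < G y \<and> G y < 1"
proof
  assume "y \<in> S"
  then have "lG G < ereal y" "ereal y < rG G" by (auto simp: open_support_def)
  then obtain z z' where "0 < G z" "z < y" "G z' < 1" "y < z'"
    unfolding lG_def rG_def Inf_less_iff less_Sup_iff by auto
  then show "0 < G y" "G y < 1"
    using G_mono[of z y] G_mono[of y z'] by auto
qed

lemma G_attains: assumes "0 < v" "v < 1" shows "\<exists>y. G y = v"
proof -
  obtain a where a: "G a < v"
    using order_tendstoD(2)[OF G_at_bot] assms by (auto simp: eventually_at_bot_linorder)
  obtain b where b: "G b > v"
    using order_tendstoD(1)[OF G_at_top] assms by (auto simp: eventually_at_top_linorder)
  have "a \<le> b" using a b G_mono[of b a] by (cases "a \<le> b") auto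
  then show ?thesis using IVT'[of G a v b] a b continuous_on_subset[OF cont] by auto
qed

text \<open>The open support contains two distinct points (e.g. the 2/5- and 3/5-quantiles).\<close>
lemma open_support_two_points: obtains y0 y1 where "y0 \<in> S" "y1 \<in> S" "y0 < y1"
proof -
  obtain a b c d where G_abcd: "G a = 1/5" "G b = 2/5" "G c = 3/5" "G d = 4/5"
    using G_attains[of "1/5"] G_attains[of "2/5"] G_attains[of "3/5"] G_attains[of "4/5"] by force
  have less: "x < y" if "G x < G y" for x y using G_mono[of y x] that by (cases "x < y") auto
  have "lG G \<le> ereal a" "ereal d \<le> rG G"
    unfolding lG_def rG_def using G_abcd by (auto intro!: Inf_lower Sup_upper)
  moreover have "a < b" "b < c" "c < d" using less G_abcd by auto
  ultimately have "b \<in> S" "c \<in> S"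
    using order.strict_trans1[of "lG G" "ereal a"] order.strict_trans2[of _ "ereal d" "rG G"]
    by (auto simp: open_support_def)
  then show thesis using \<open>b < c\<close> that by blast
qed

lemma open_support_eventually:
  "eventually (\<lambda>y. y \<in> S) (at_right_e (lG G))" "at_right_e (lG G) \<noteq> bot"
proof -
  obtain y0 y1 where y0: "y0 \<in> S" and "y1 \<in> S" by (rule open_support_two_points)
  then have "lG G < ereal y0" "ereal y0 < rG G" by (auto simp: open_support_def)
  then show "at_right_e (lG G) \<noteq> bot"
    by (cases "lG G") (auto simp: at_right_e_def trivial_limit_at_bot_linorder)
  have "eventually (\<lambda>y. y \<in> {y. y < y0} \<inter> {y. lG G < ereal y}) (at_right_e (lG G))"
  proof (cases "lG G")
    case (real l)
    with \<open>lG G < ereal y0\<close> show ?thesis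
      using eventually_at_right_real[of l y0] by (auto simp: at_right_e_def elim: eventually_mono)
  qed (use \<open>lG G < ereal y0\<close> in \<open>auto simp: at_right_e_def eventually_at_bot_dense\<close>)
  then show "eventually (\<lambda>y. y \<in> S) (at_right_e (lG G))"
    using open_support_Icc[OF _ y0] \<open>lG G < ereal y0\<close> \<open>ereal y0 < rG G\<close>
    by (auto simp: open_support_def elim!: eventually_mono
        intro: order.strict_trans[of _ "ereal y0" "rG G"])
qed

text \<open>At the left end of the support, \<open>G\<close> vanishes (this uses continuity of \<open>G\<close> when the
  endpoint is finite).\<close>
lemma G_tendsto_left_end: "(G \<longlongrightarrow> 0) (at_right_e (lG G))"
proof (cases "lG G")
  case (real l)
  have isCont: "isCont G l" using cont by (simp add: continuous_on_eq_continuous_at)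
  have "G l = 0"
  proof (rule ccontr)
    assume "G l \<noteq> 0"
    then have "0 < G l" using G_nonneg[of l] by simp
    moreover have "(G \<longlongrightarrow> G l) (at_left l)"
      using isCont by (simp add: isCont_def filterlim_at_split)
    ultimately have "eventually (\<lambda>x. 0 < G x) (at_left l)"
      using order_tendstoD(1) by blast
    moreover have "eventually (\<lambda>x. x < l) (at_left l)" by (simp add: eventually_at_filter)
    ultimately obtain z where "0 < G z" "z < l"
      using eventually_happens'[OF trivial_limit_at_left_real] eventually_conj by blast
    then have "lG G \<le> ereal z" unfolding lG_def by (intro Inf_lower) auto
    with real \<open>z < l\<close> show False by simp
  qed
  then show ?thesis
    using isCont real by (simp add: at_right_e_def isCont_def filterlim_at_split)
next
  case PInf
  obtain y0 y1 where "y0 \<in> S" "y1 \<in> S" by (rule open_support_two_points)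
  with PInf show ?thesis by (simp add: open_support_def)
qed (use G_at_bot in \<open>simp add: at_right_e_def\<close>)

lemma hazR_mono: "mono_on S (hazR G)"
  using G_open_support G_mono by (intro mono_onI) (simp add: hazR_def)

lemma hazR_cont: "continuous_on S (hazR G)"
  unfolding hazR_def[abs_def] using G_open_support
  by (intro continuous_intros continuous_on_subset[OF cont]) force+

lemma G_from_hazR: "y \<in> S \<Longrightarrow> G y = 1 - exp (- hazR G y)"
  using G_open_support by (simp add: hazR_def)

lemma hazR_tendsto_left_end: "(hazR G \<longlongrightarrow> 0) (at_right_e (lG G))"
proof -
  have "((\<lambda>y. - ln (1 - G y)) \<longlongrightarrow> - ln (1 - 0)) (at_right_e (lG G))"
    by (intro tendsto_intros G_tendsto_left_end) simp
  then show ?thesis by (simp add: hazR_def[abs_def])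
qed

lemma frozen_hazR: "s \<in> S \<Longrightarrow> t \<in> S \<Longrightarrow> s \<le> t \<Longrightarrow> frozen (hazR G) s t"
  using open_support_Icc
  by unfold_locales (auto intro: continuous_on_subset[OF hazR_cont] mono_on_subset[OF hazR_mono])

lemma rec_cond_exp_frozen:
  "rec_cond_exp G h s t = (LINT x:{s<..<t}|frozen_measure (hazR G) s t. h x) / (hazR G t - hazR G s)"
  by (simp add: rec_cond_exp_def hazR_measure_def frozen_measure_def)

end

locale record_setting = cont_distr_fun G for G :: "real \<Rightarrow> real" +
  fixes g :: "real \<Rightarrow> real" and \<tau> :: real
  assumes g_pos: "\<And>y. y \<in> S \<Longrightarrow> 0 < g y"
    and g_cont: "continuous_on S g"
    and g_dec: "strict_antimono_on S g"
    and g_tau: "((\<lambda>y. 1 / (g y)\<^sup>2) \<longlongrightarrow> \<tau>) (at_right_e (lG G))"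
begin

abbreviation u :: "real \<Rightarrow> real" where
  "u y \<equiv> 1 / (g y)\<^sup>2"

abbreviation harmonic_property :: bool where
  "harmonic_property \<equiv>
     \<forall>s t. s \<in> S \<and> t \<in> S \<and> s < t \<longrightarrow> rec_cond_exp G g s t = harmonic_mean (g s) (g t)"

lemma u_strict_mono: "strict_mono_on S u"
proof (rule strict_mono_onI)
  fix a b assume "a \<in> S" "b \<in> S" "a < b"
  then have "g b < g a" "0 < g b" using g_dec g_pos by (auto simp: monotone_on_def)
  then show "u a < u b" by (simp add: frac_less2 power_strict_mono)
qed

lemma hazard_form_imp_harmonic:
  assumes c: "c > 0" and G_form: "\<And>y. y \<in> S \<Longrightarrow> G y = 1 - exp (- c * (u y - \<tau>))"
  shows harmonic_property
proof (intro allI impI)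
  fix s t assume st: "s \<in> S \<and> t \<in> S \<and> s < t"
  then interpret frozen "hazR G" s t by (intro frozen_hazR) auto
  have "{s..t} \<subseteq> S" using open_support_Icc st by blast
  then have "hazR G y = c * (u y - \<tau>)" if "y \<in> {s..t}" for y
    using G_form that by (auto simp: hazR_def)
  then show "rec_cond_exp G g s t = harmonic_mean (g s) (g t)"
    unfolding rec_cond_exp_frozen
    using c g_pos \<open>{s..t} \<subseteq> S\<close> g_dec st
    by (intro harmonic_conditional_mean) (auto simp: monotone_on_def)
qed

lemma harmonic_integral:
  assumes harmonic_property and st: "s \<in> S" "t \<in> S" "s < t"
  shows "hazR G s < hazR G t"
    and "(LINT x:{s<..<t}|frozen_measure (hazR G) s t. g x)
           = (hazR G t - hazR G s) * harmonic_mean (g s) (g t)"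
proof -
  have mean: "(LINT x:{s<..<t}|frozen_measure (hazR G) s t. g x) / (hazR G t - hazR G s)
      = harmonic_mean (g s) (g t)"
    using assms by (simp add: rec_cond_exp_frozen)
  moreover have "harmonic_mean (g s) (g t) > 0"
    using g_pos[of s] g_pos[of t] st by (simp add: harmonic_mean_def)
  ultimately have "hazR G t \<noteq> hazR G s" by auto
  moreover have "hazR G s \<le> hazR G t" using hazR_mono st by (auto intro: mono_onD)
  ultimately show "hazR G s < hazR G t" by simp
  then show "(LINT x:{s<..<t}|frozen_measure (hazR G) s t. g x)
           = (hazR G t - hazR G s) * harmonic_mean (g s) (g t)"
    using mean by (simp add: field_simps)
qed

text \<open>Splitting \<open>(a,c)\<close> at \<open>b\<close>: additivity of the conditional integrals combined with the
  harmonic-mean identity forces equal slopes of the hazard against \<open>u\<close>.\<close>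
lemma harmonic_equal_slopes:
  assumes harmonic_property and abc: "a \<in> S" "b \<in> S" "c \<in> S" "a < b" "b < c"
  shows "slope (hazR G) u a b = slope (hazR G) u b c"
proof -
  interpret frozen "hazR G" a c by (rule frozen_hazR) (use abc in auto)
  have "(LINT x:{a<..<c}|\<mu>. g x)
      = (LINT x:{a<..<b}|frozen_measure (hazR G) a b. g x)
        + (LINT x:{b<..<c}|frozen_measure (hazR G) b c. g x)"
    using abc open_support_Icc[of a c]
    by (intro set_integral_split continuous_on_subset[OF g_cont]) auto
  then have "(hazR G b - hazR G a) * harmonic_mean (g a) (g b)
      + (hazR G c - hazR G b) * harmonic_mean (g b) (g c)
      = ((hazR G b - hazR G a) + (hazR G c - hazR G b)) * harmonic_mean (g a) (g c)"
    using harmonic_integral(2)[OF assms(1)] abc by simp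
  moreover have "g b < g a" "g c < g b" "0 < g c"
    using g_dec g_pos abc by (auto simp: monotone_on_def)
  ultimately show ?thesis
    unfolding slope_def by (rule harmonic_mean_balance[rotated 3])
qed

text \<open>Converse: the harmonic-mean property makes the hazard affine in \<open>u\<close>; the vanishing of
  the hazard at the left end of the support identifies the additive constant.\<close>
lemma harmonic_imp_hazard_form:
  assumes harmonic_property
  shows "\<exists>c>0. \<forall>y\<in>S. G y = 1 - exp (- c * (u y - \<tau>))"
proof -
  obtain y0 y1 where y: "y0 \<in> S" "y1 \<in> S" "y0 < y1" by (rule open_support_two_points)
  define K where "K = slope (hazR G) u y0 y1"
  have "K > 0"
    using harmonic_integral(1)[OF assms y] u_strict_mono y
    by (simp add: K_def slope_def strict_mono_on_def)
  have affine: "hazR G y = hazR G y0 + K * (u y - u y0)" if "y \<in> S" for y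
    unfolding K_def
    by (rule equal_slopes_affine[OF u_strict_mono harmonic_equal_slopes[OF assms] y that])
  have "((\<lambda>y. hazR G y0 + K * (u y - u y0)) \<longlongrightarrow> hazR G y0 + K * (\<tau> - u y0)) (at_right_e (lG G))"
    by (intro tendsto_intros g_tau)
  moreover have "((\<lambda>y. hazR G y0 + K * (u y - u y0)) \<longlongrightarrow> 0) (at_right_e (lG G))"
    using hazR_tendsto_left_end
    by (rule Lim_transform_eventually)
      (use open_support_eventually(1) in \<open>auto elim: eventually_mono simp: affine\<close>)
  ultimately have "hazR G y0 + K * (\<tau> - u y0) = 0"
    using open_support_eventually(2) tendsto_unique by blast
  then have "hazR G y = K * (u y - \<tau>)" if "y \<in> S" for y
    using affine[OF that] by (simp add: algebra_simps)
  then show ?thesis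
    using \<open>K > 0\<close> G_from_hazR by auto
qed

end

theorem corollary3:
  fixes G g :: "real \<Rightarrow> real" and n :: nat and \<tau> :: real
  assumes "n \<ge> 2"
    and "is_distr_fun G" and "continuous_on UNIV G"
    and "\<And>y. lG G < ereal y \<Longrightarrow> ereal y < rG G \<Longrightarrow> g y > 0"
    and "continuous_on {y. lG G < ereal y \<and> ereal y < rG G} g"
    and "strict_antimono_on {y. lG G < ereal y \<and> ereal y < rG G} g"
    and "(g \<longlongrightarrow> 0) (at_left_e (rG G))"
    and "((\<lambda>y. 1 / (g y)\<^sup>2) \<longlongrightarrow> \<tau>) (at_right_e (lG G))"
  shows "(\<forall>s t. lG G < ereal s \<and> s < t \<and> ereal t < rG G \<longrightarrow>
            rec_cond_exp G g s t = 2 * g s * g t / (g s + g t))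
         \<longleftrightarrow> (\<exists>c>0. \<forall>y. lG G < ereal y \<and> ereal y < rG G \<longrightarrow>
                G y = 1 - exp (- c * (1 / (g y)\<^sup>2 - \<tau>)))"
proof -
  interpret record_setting G g \<tau>
    using assms(2-6,8) by unfold_locales (simp_all add: open_support_def)
  have pairs: "s \<in> S \<and> t \<in> S \<and> s < t \<longleftrightarrow> lG G < ereal s \<and> s < t \<and> ereal t < rG G" for s t
    using order.strict_trans[of "lG G" "ereal s" "ereal t"] order.strict_trans[of "ereal s" "ereal t" "rG G"]
    by (auto simp: open_support_def)
  have "harmonic_property \<longleftrightarrow> (\<exists>c>0. \<forall>y\<in>S. G y = 1 - exp (- c * (u y - \<tau>)))"
    using hazard_form_imp_harmonic harmonic_imp_hazard_form by blast
  then show ?thesis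
    unfolding pairs harmonic_mean_def by (simp add: open_support_def)
qed
end
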